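(* Let $(M,\cdot,1)$ be a monoid without a zero element, $\Sigma$ a finite alphabet, and $(g_h,h)$ a maximal factorization on $L$. Then $\mathcal{R}_L=\mathrm{RcgCap}^{(g_h,h)}_L$.
   Context: $L$ is the set of all functions $\Sigma^*\to M$; $\varepsilon$ the empty word; $(m\cdot\ell)(\gamma)=m\cdot\ell(\gamma)$; $\Delta_\alpha(\ell)(\gamma)=\ell(\alpha\gamma)$. A factorization on $L$ is a pair $g:L\to M$, $f:L\to L$ with $g(\ell)\cdot f(\ell)=\ell$ for all $\ell$; it is maximal if moreover $f(m\cdot\ell)=f(\ell)$ for all $\ell\in L$, $m\in M$. Define $S^{(g,f)}_\varepsilon=\mathrm{id}_L$, $S^{(g,f)}_{\alpha\sigma}=f\circ\Delta_\sigma\circ S^{(g,f)}_\alpha$. An $M$-DFA is $(Q,\Sigma,u,i_u,\delta,w,\rho)$ with $Q$ finite nonempty, initial state $u$, initial value $i_u\in M$, $\delta:Q\times\Sigma\to Q$, $w:Q\times\Sigma\to M$, $\rho:Q\to M$; with $q\alpha$ the extended transition and $w^*(q,\varepsilon)=1$, $w^*(q,\alpha\sigma)=w^*(q,\alpha)\cdot w(q\alpha,\sigma)$, it recognizes $\alpha\mapsto i_u\cdot w^*(u,\alpha)\cdot\rho(u\alpha)$. $\mathcal{R}_L$ is the set of $M$-languages recognized by some $M$-DFA. For a factorization $(g,f)$, $\mathrm{RcgCap}^{(g,f)}_L$ is the set of $\ell\in L$ such that the automaton $N^{(g,f)}(f(\ell),1)$ is an $M$-DFA, i.e. such that $\{S^{(g,f)}_\alpha(f(\ell))\mid\alpha\in\Sigma^*\}$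 is finite; here $N^{(g,f)}(\ell',m)$ has states $S^{(g,f)}_\alpha(\ell')$, initial state $\ell'$, initial value $m$, $\delta(S^{(g,f)}_\alpha(\ell'),\sigma)=S^{(g,f)}_{\alpha\sigma}(\ell')$, $w(S^{(g,f)}_\alpha(\ell'),\sigma)=g(\Delta_\sigma(S^{(g,f)}_\alpha(\ell')))$, $\rho(S^{(g,f)}_\alpha(\ell'))=(S^{(g,f)}_\alpha(\ell'))(\varepsilon)$. *)

theory Defs
  imports Main
begin

definition lmult :: "'m::monoid_mult \<Rightarrow> ('b list \<Rightarrow> 'm) \<Rightarrow> ('b list \<Rightarrow> 'm)" where
  "lmult m l = (\<lambda>\<gamma>. m * l \<gamma>)"

definition Delta :: "'b list \<Rightarrow> ('b list \<Rightarrow> 'm) \<Rightarrow> ('b list \<Rightarrow> 'm)" where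
  "Delta \<alpha> l = (\<lambda>\<gamma>. l (\<alpha> @ \<gamma>))"

definition has_zero :: "'m::monoid_mult itself \<Rightarrow> bool" where
  "has_zero _ = (\<exists>z::'m. \<forall>m. z * m = z \<and> m * z = z)"

definition factorization ::
  "(('b list \<Rightarrow> 'm::monoid_mult) \<Rightarrow> 'm) \<Rightarrow> (('b list \<Rightarrow> 'm) \<Rightarrow> ('b list \<Rightarrow> 'm)) \<Rightarrow> bool" where
  "factorization g f = (\<forall>l. lmult (g l) (f l) = l)"

definition maximal_factorization ::
  "(('b list \<Rightarrow> 'm::monoid_mult) \<Rightarrow> 'm) \<Rightarrow> (('b list \<Rightarrow> 'm) \<Rightarrow> ('b list \<Rightarrow> 'm)) \<Rightarrow> bool" where
  "maximal_factorization g f = (factorization g f \<and> (\<forall>l m. f (lmult m l) = f l))"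

text \<open>S_eps = id, S_(alpha sigma) = f o Delta_sigma o S_alpha (words processed left to right).\<close>
definition S :: "(('b list \<Rightarrow> 'm) \<Rightarrow> ('b list \<Rightarrow> 'm)) \<Rightarrow> 'b list \<Rightarrow> ('b list \<Rightarrow> 'm) \<Rightarrow> ('b list \<Rightarrow> 'm)" where
  "S f \<alpha> = fold (\<lambda>\<sigma> h. f \<circ> Delta [\<sigma>] \<circ> h) \<alpha> id"

definition RcgCap ::
  "(('b list \<Rightarrow> 'm::monoid_mult) \<Rightarrow> 'm) \<Rightarrow> (('b list \<Rightarrow> 'm) \<Rightarrow> ('b list \<Rightarrow> 'm)) \<Rightarrow> ('b list \<Rightarrow> 'm) set" where
  "RcgCap g f = {l. finite {S f \<alpha> (f l) | \<alpha>. True}}"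

text \<open>M-DFAs. States are natural numbers (any finite state set can be renamed into nat).\<close>
definition is_MDFA :: "nat set \<Rightarrow> nat \<Rightarrow> (nat \<Rightarrow> 'b \<Rightarrow> nat) \<Rightarrow> bool" where
  "is_MDFA Q u \<delta> = (finite Q \<and> Q \<noteq> {} \<and> u \<in> Q \<and> (\<forall>q\<in>Q. \<forall>\<sigma>. \<delta> q \<sigma> \<in> Q))"

definition ext_trans :: "(nat \<Rightarrow> 'b \<Rightarrow> nat) \<Rightarrow> nat \<Rightarrow> 'b list \<Rightarrow> nat" where
  "ext_trans \<delta> q \<alpha> = fold (\<lambda>\<sigma> p. \<delta> p \<sigma>) \<alpha> q"

text \<open>w*(q,eps) = 1, w*(q, alpha sigma) = w*(q,alpha) * w(q alpha, sigma); defined on the reversed word.\<close>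
fun wstar_rev :: "(nat \<Rightarrow> 'b \<Rightarrow> nat) \<Rightarrow> (nat \<Rightarrow> 'b \<Rightarrow> 'm::monoid_mult) \<Rightarrow> nat \<Rightarrow> 'b list \<Rightarrow> 'm" where
  "wstar_rev \<delta> w q [] = 1"
| "wstar_rev \<delta> w q (\<sigma> # \<beta>) = wstar_rev \<delta> w q \<beta> * w (ext_trans \<delta> q (rev \<beta>)) \<sigma>"

definition wstar :: "(nat \<Rightarrow> 'b \<Rightarrow> nat) \<Rightarrow> (nat \<Rightarrow> 'b \<Rightarrow> 'm::monoid_mult) \<Rightarrow> nat \<Rightarrow> 'b list \<Rightarrow> 'm" where
  "wstar \<delta> w q \<alpha> = wstar_rev \<delta> w q (rev \<alpha>)"

definition recognized ::
  "nat \<Rightarrow> 'm::monoid_mult \<Rightarrow> (nat \<Rightarrow> 'b \<Rightarrow> nat) \<Rightarrow> (nat \<Rightarrow> 'b \<Rightarrow> 'm) \<Rightarrow> (nat \<Rightarrow> 'm) \<Rightarrow> ('b list \<Rightarrow> 'm)" where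
  "recognized u i \<delta> w \<rho> = (\<lambda>\<alpha>. i * wstar \<delta> w u \<alpha> * \<rho> (ext_trans \<delta> u \<alpha>))"

definition R_L :: "('b list \<Rightarrow> 'm::monoid_mult) set" where
  "R_L = {l. \<exists>Q u i \<delta> w \<rho>. is_MDFA Q u \<delta> \<and> l = recognized u i \<delta> w \<rho>}"

end

theory Submission
  imports Defs
begin

(* For a maximal factorization (g, h) the states of the canonical automaton are the normalized
   derivatives: S_alpha (h l) = h (Delta_alpha l), because h forgets the scalar that g splits off.
   A language recognized by an M-DFA satisfies Delta_alpha l = m * l_q, where l_q is the language
   accepted from the state q reached on alpha; hence it has at most |Q| normalized derivatives.
   Conversely, a finite set of languages containing h l and closed under x |-> h (Delta_sigma x)
   is the state set of an M-DFA for l, with weights g (Delta_sigma x) and final values x(epsilon). *)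

lemma S_Nil [simp]: "S f [] = id"
  by (simp add: S_def)

lemma S_snoc [simp]: "S f (\<alpha> @ [\<sigma>]) x = f (Delta [\<sigma>] (S f \<alpha> x))"
  by (simp add: S_def)

lemma Delta_Nil [simp]: "Delta [] l = l"
  by (simp add: Delta_def)

lemma Delta_append: "Delta (\<alpha> @ \<beta>) l = Delta \<beta> (Delta \<alpha> l)"
  by (simp add: Delta_def)

lemma Delta_lmult: "Delta \<alpha> (lmult m l) = lmult m (Delta \<alpha> l)"
  by (simp add: Delta_def lmult_def)

lemma lmult_lmult: "lmult m (lmult n l) = lmult (m * n) l"
  by (simp add: lmult_def mult.assoc)

lemma maximal_factorization_Delta_absorb:
  assumes "maximal_factorization g h"
  shows "h (Delta \<alpha> (h l)) = h (Delta \<alpha> l)"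
proof -
  have "lmult (g l) (h l) = l" and invariant: "\<And>l m. h (lmult m l) = h l"
    using assms unfolding maximal_factorization_def factorization_def by auto
  then have "Delta \<alpha> l = lmult (g l) (Delta \<alpha> (h l))"
    by (metis Delta_lmult)
  then show ?thesis
    by (simp add: invariant)
qed

lemma maximal_factorization_S:
  assumes "maximal_factorization g h"
  shows "S h \<alpha> (h l) = h (Delta \<alpha> l)"
proof (induction \<alpha> rule: rev_induct)
  case Nil
  show ?case
    using maximal_factorization_Delta_absorb[OF assms, of "[]"] by simp
next
  case (snoc \<sigma> \<alpha>)
  then show ?case
    by (simp add: maximal_factorization_Delta_absorb[OF assms] Delta_append)
qed

lemma RcgCap_maximal_factorization:
  assumes "maximal_factorization g h"
  shows "RcgCap g h = {l. finite (range (\<lambda>\<alpha>. h (Delta \<alpha> l)))}"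
  unfolding RcgCap_def maximal_factorization_S[OF assms] by (simp add: full_SetCompr_eq)

lemma ext_trans_Nil [simp]: "ext_trans \<delta> q [] = q"
  by (simp add: ext_trans_def)

lemma ext_trans_Cons [simp]: "ext_trans \<delta> q (\<sigma> # \<alpha>) = ext_trans \<delta> (\<delta> q \<sigma>) \<alpha>"
  by (simp add: ext_trans_def)

lemma ext_trans_append: "ext_trans \<delta> q (\<alpha> @ \<beta>) = ext_trans \<delta> (ext_trans \<delta> q \<alpha>) \<beta>"
  by (simp add: ext_trans_def)

lemma is_MDFA_ext_trans:
  assumes "is_MDFA Q u \<delta>"
  shows "ext_trans \<delta> u \<alpha> \<in> Q"
  using assms by (induction \<alpha> rule: rev_induct) (auto simp: is_MDFA_def ext_trans_def)

lemma wstar_Nil [simp]: "wstar \<delta> w q [] = 1"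
  by (simp add: wstar_def)

lemma wstar_snoc [simp]: "wstar \<delta> w q (\<alpha> @ [\<sigma>]) = wstar \<delta> w q \<alpha> * w (ext_trans \<delta> q \<alpha>) \<sigma>"
  by (simp add: wstar_def)

lemma wstar_append:
  "wstar \<delta> w q (\<alpha> @ \<beta>) = wstar \<delta> w q \<alpha> * wstar \<delta> w (ext_trans \<delta> q \<alpha>) \<beta>"
proof (induction \<beta> rule: rev_induct)
  case Nil
  show ?case by simp
next
  case (snoc \<sigma> \<beta>)
  then show ?case
    using wstar_snoc[of \<delta> w q "\<alpha> @ \<beta>" \<sigma>] by (simp add: ext_trans_append mult.assoc)
qed

lemma wstar_Cons: "wstar \<delta> w q (\<sigma> # \<beta>) = w q \<sigma> * wstar \<delta> w (\<delta> q \<sigma>) \<beta>"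
  using wstar_append[of \<delta> w q "[\<sigma>]" \<beta>] wstar_snoc[of \<delta> w q "[]" \<sigma>] by simp

definition state_language ::
  "(nat \<Rightarrow> 'b \<Rightarrow> nat) \<Rightarrow> (nat \<Rightarrow> 'b \<Rightarrow> 'm::monoid_mult) \<Rightarrow> (nat \<Rightarrow> 'm) \<Rightarrow> nat \<Rightarrow> 'b list \<Rightarrow> 'm"
  where "state_language \<delta> w \<rho> q = (\<lambda>\<gamma>. wstar \<delta> w q \<gamma> * \<rho> (ext_trans \<delta> q \<gamma>))"

lemma recognized_eq_lmult_state_language:
  "recognized u i \<delta> w \<rho> = lmult i (state_language \<delta> w \<rho> u)"
  by (simp add: recognized_def state_language_def lmult_def mult.assoc)

lemma state_language_Nil: "state_language \<delta> w \<rho> q [] = \<rho> q"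
  by (simp add: state_language_def)

lemma state_language_Cons:
  "state_language \<delta> w \<rho> q (\<sigma> # \<beta>) = w q \<sigma> * state_language \<delta> w \<rho> (\<delta> q \<sigma>) \<beta>"
  by (simp add: state_language_def wstar_Cons mult.assoc)

lemma Delta_state_language:
  "Delta \<alpha> (state_language \<delta> w \<rho> q)
     = lmult (wstar \<delta> w q \<alpha>) (state_language \<delta> w \<rho> (ext_trans \<delta> q \<alpha>))"
  by (simp add: Delta_def lmult_def state_language_def wstar_append ext_trans_append mult.assoc)

lemma state_language_eqI:
  assumes "x \<in> X"
    and final: "\<And>x. x \<in> X \<Longrightarrow> x [] = \<rho> (s x)"
    and step: "\<And>x \<sigma>. x \<in> X \<Longrightarrow>
      \<exists>y\<in>X. s y = \<delta> (s x) \<sigma> \<and> Delta [\<sigma>] x = lmult (w (s x) \<sigma>) y"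
  shows "x = state_language \<delta> w \<rho> (s x)"
proof
  fix \<beta>
  show "x \<beta> = state_language \<delta> w \<rho> (s x) \<beta>"
    using \<open>x \<in> X\<close>
  proof (induction \<beta> arbitrary: x)
    case Nil
    then show ?case by (simp add: final state_language_Nil)
  next
    case (Cons \<sigma> \<beta>)
    then obtain y where "y \<in> X" and "s y = \<delta> (s x) \<sigma>"
      and "Delta [\<sigma>] x = lmult (w (s x) \<sigma>) y"
      using step by blast
    then have "x (\<sigma> # \<beta>) = w (s x) \<sigma> * y \<beta>"
      by (metis Delta_def append_Cons append_Nil lmult_def)
    also have "\<dots> = state_language \<delta> w \<rho> (s x) (\<sigma> # \<beta>)"
      using Cons.IH[OF \<open>y \<in> X\<close>] \<open>s y = \<delta> (s x) \<sigma>\<close> by (simp add: state_language_Cons)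
    finally show ?case .
  qed
qed

lemma R_L_finite_derivatives:
  assumes "maximal_factorization g h" and "l \<in> R_L"
  shows "finite (range (\<lambda>\<alpha>. h (Delta \<alpha> l)))"
proof -
  obtain Q u i \<delta> w \<rho> where dfa: "is_MDFA Q u \<delta>" and l: "l = recognized u i \<delta> w \<rho>"
    using assms(2) unfolding R_L_def by blast
  have invariant: "\<And>l m. h (lmult m l) = h l"
    using assms(1) unfolding maximal_factorization_def by auto
  have "h (Delta \<alpha> l) = h (state_language \<delta> w \<rho> (ext_trans \<delta> u \<alpha>))" for \<alpha>
    by (simp add: l recognized_eq_lmult_state_language Delta_lmult Delta_state_language
        lmult_lmult invariant)
  then have "range (\<lambda>\<alpha>. h (Delta \<alpha> l)) \<subseteq> (\<lambda>q. h (state_language \<delta> w \<rho> q)) ` Q"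
    using is_MDFA_ext_trans[OF dfa] by auto
  moreover have "finite Q"
    using dfa by (simp add: is_MDFA_def)
  ultimately show ?thesis
    by (simp add: finite_subset)
qed

lemma factorization_closed_derivatives_R_L:
  assumes fact: "factorization g h" and "finite X" and "h l \<in> X"
    and closed: "\<And>x \<sigma>. x \<in> X \<Longrightarrow> h (Delta [\<sigma>] x) \<in> X"
  shows "l \<in> R_L"
proof -
  obtain e where e: "bij_betw e {0..<card X} X"
    using ex_bij_betw_nat_finite \<open>finite X\<close> by blast
  define idx where "idx = inv_into {0..<card X} e"
  have e_idx: "e (idx x) = x" if "x \<in> X" for x
    using e that unfolding idx_def by (meson bij_betw_inv_into_right)
  have idx_in: "idx x \<in> {0..<card X}" if "x \<in> X" for x
    using e that unfolding idx_def by (metis bij_betw_def inv_into_into)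
  define \<delta> where "\<delta> q \<sigma> = idx (h (Delta [\<sigma>] (e q)))" for q \<sigma>
  define w where "w q \<sigma> = g (Delta [\<sigma>] (e q))" for q \<sigma>
  define \<rho> where "\<rho> q = e q []" for q
  have dfa: "is_MDFA {0..<card X} (idx (h l)) \<delta>"
    unfolding is_MDFA_def \<delta>_def
    using idx_in closed bij_betwE[OF e] \<open>h l \<in> X\<close> \<open>finite X\<close> card_gt_0_iff by auto
  have language: "x = state_language \<delta> w \<rho> (idx x)" if "x \<in> X" for x
  proof (rule state_language_eqI[OF that])
    show "x [] = \<rho> (idx x)" if "x \<in> X" for x
      using that by (simp add: \<rho>_def e_idx)
    show "\<exists>y\<in>X. idx y = \<delta> (idx x) \<sigma> \<and> Delta [\<sigma>] x = lmult (w (idx x) \<sigma>) y"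
      if "x \<in> X" for x \<sigma>
    proof (rule bexI[where x = "h (Delta [\<sigma>] x)"])
      show "h (Delta [\<sigma>] x) \<in> X"
        using closed that .
      show "idx (h (Delta [\<sigma>] x)) = \<delta> (idx x) \<sigma>
        \<and> Delta [\<sigma>] x = lmult (w (idx x) \<sigma>) (h (Delta [\<sigma>] x))"
        using fact that by (simp add: \<delta>_def w_def e_idx factorization_def)
    qed
  qed
  have "l = lmult (g l) (h l)"
    using fact unfolding factorization_def by simp
  also have "\<dots> = recognized (idx (h l)) (g l) \<delta> w \<rho>"
    using language[OF \<open>h l \<in> X\<close>] by (simp add: recognized_eq_lmult_state_language)
  finally show ?thesis
    using dfa unfolding R_L_def by blast
qed

theorem lemma6:
  fixes g :: "('b::finite list \<Rightarrow> 'm::monoid_mult) \<Rightarrow> 'm"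
    and h :: "('b list \<Rightarrow> 'm) \<Rightarrow> ('b list \<Rightarrow> 'm)"
  assumes "\<not> has_zero TYPE('m)"
    and "maximal_factorization g h"
  shows "(R_L :: ('b list \<Rightarrow> 'm) set) = RcgCap g h"
proof (rule set_eqI)
  fix l :: "'b list \<Rightarrow> 'm"
  let ?X = "range (\<lambda>\<alpha>. h (Delta \<alpha> l))"
  have "l \<in> R_L \<longleftrightarrow> finite ?X"
  proof
    show "l \<in> R_L \<Longrightarrow> finite ?X"
      using R_L_finite_derivatives[OF assms(2)] .
    have fact: "factorization g h"
      using assms(2) by (simp add: maximal_factorization_def)
    have "h l \<in> ?X"
      using Delta_Nil by (metis rangeI)
    moreover have "h (Delta [\<sigma>] x) \<in> ?X" if "x \<in> ?X" for x \<sigma>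
      using that by (auto simp: maximal_factorization_Delta_absorb[OF assms(2)] Delta_append[symmetric])
    ultimately show "finite ?X \<Longrightarrow> l \<in> R_L"
      using factorization_closed_derivatives_R_L[OF fact] by blast
  qed
  then show "l \<in> R_L \<longleftrightarrow> l \<in> RcgCap g h"
    by (simp add: RcgCap_maximal_factorization[OF assms(2)])
qed

end
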